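(* In the calculus $\lambda^{RE}$ described in the context, let $\delta$ be a pending substitution, $e_x$ an expression, and $v_{x_1},v_{x_2}$ values with $\delta_1(e_x)\to^*v_{x_1}$ and $\delta_2(e_x)\to^*v_{x_2}$. If $\delta,(v_{x_1},v_{x_2})/x\vdash e_1\approx e_2:\tau$, then $\delta\vdash e_1\approx e_2:\tau[x:=e_x]$.
   Context: Syntax of $\lambda^{RE}$. Basic types $b ::= \mathsf{Bool}\mid\mathsf{Unit}$. Constants $c ::= \mathsf{true}\mid\mathsf{false}\mid\mathsf{unit}\mid (=_b)\mid (=_{(c,b)})$. Expressions $e ::= c\mid x\mid e\ e\mid \lambda x{:}\tau.\,e\mid \mathsf{BEq}_b\ e\ e\ e\mid \mathsf{XEq}_{x:\tau\to\tau}\ e\ e\ e$. Values $v ::= c\mid \lambda x{:}\tau.\,e\mid \mathsf{BEq}_b\ e\ e\ v\mid \mathsf{XEq}_{x:\tau\to\tau}\ e\ e\ v$. Types $\tau ::= \{x{:}b\mid e\}\mid x{:}\tau\to\tau\mid \mathsf{PEq}_{\tau}\{e\}\{e\}$. $e[x:=e']$, $\tau[x:=e']$ is capture-avoiding substitution. Reduction: evaluation contexts $E ::= \bullet\mid E\ e\mid v\ E\mid \mathsf{BEq}_b\ e\ e\ E\mid\mathsf{XEq}_{x:\tau\to\tau}\ e\ e\ E$; $E[e]\to E[e']$ if $e\to e'$; $(\lambda x{:}\tau.\,e)\ v\to e[x:=v]$; $(=_b)\ c_1\to(=_{(c_1,b)})$; $(=_{(c_1,b)})\ c_2\to\mathsf{true}$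 if $c_1,c_2$ syntactically equal, else $\to\mathsf{false}$. $\to^*$ is the reflexive–transitive closure. Basic typing $\emptyset\vdash_B c:b$ means the constant $c$ has simple type $b$ ($\mathsf{true},\mathsf{false}$ have $\mathsf{Bool}$; $\mathsf{unit}$ has $\mathsf{Unit}$; equality constants have function types). Equivalence logical relation. A pending substitution $\delta$ maps variables to pairs of closed values; $\delta_1,\delta_2$ are its two component substitutions (applied to expressions as $\delta_i(e)$), and $\delta,(v_1,v_2)/x$ extends it. Value relation $\delta\vdash v_1\approx_{val}v_2:\tau$ (by recursion on $\tau$): for $\{x{:}b\mid r\}$: $v_1=v_2=c$ with $\emptyset\vdash_Bc:b$, $\delta_1(r[x:=c])\to^*\mathsf{true}$ and $\delta_2(r[x:=c])\to^*\mathsf{true}$; for $x{:}\tau_x\to\tau$: for all $v_3,v_4$ with $\delta\vdash v_3\approx_{val}v_4:\tau_x$, $\delta,(v_3,v_4)/x\vdash v_1\ v_3\approx v_2\ v_4:\tau$; for $\mathsf{PEq}_\tau\{e_l\}\{e_r\}$: $\delta\vdash\delta_1(e_l)\approx\delta_2(e_r):\tau$. Expression relation: $\delta\vdash e_1\approx e_2:\tau$ iff there are values with $e_1\to^*v_1$, $e_2\to^*v_2$ and $\delta\vdash v_1\approx_{val}v_2:\tau$. *)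

theory Defs
  imports Main
begin

type_synonym var = nat

datatype base = BBool | BUnit

text \<open>Constants: true | false | unit | (=_b) | (=_(c,b)).\<close>
datatype const = CTrue | CFalse | CUnit | CEqB base | CEqCB const base

text \<open>Lam x t e        : \<lambda>x:t. e            (x bound in e)
  BEq b e1 e2 e3   : BEq_b e1 e2 e3
  XEq x t1 t2 e1 e2 e3 : XEq_{x:t1 \<rightarrow> t2} e1 e2 e3  (x bound in t2)
  TRef x b r       : {x:b | r}            (x bound in r)
  TArr x t1 t2     : x:t1 \<rightarrow> t2          (x bound in t2)
  TPEq t el er     : PEq_t{el}{er}\<close>
datatype exp =
    Const const
  | Var var
  | App exp exp
  | Lam var ty exp
  | BEq base exp exp exp
  | XEq var ty ty exp exp exp
and ty =
    TRef var base exp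
  | TArr var ty ty
  | TPEq ty exp exp

fun fv_e :: "exp \<Rightarrow> var set" and fv_t :: "ty \<Rightarrow> var set" where
  "fv_e (Const c) = {}"
| "fv_e (Var x) = {x}"
| "fv_e (App e1 e2) = fv_e e1 \<union> fv_e e2"
| "fv_e (Lam x t e) = fv_t t \<union> (fv_e e - {x})"
| "fv_e (BEq b e1 e2 e3) = fv_e e1 \<union> fv_e e2 \<union> fv_e e3"
| "fv_e (XEq x t1 t2 e1 e2 e3) = fv_t t1 \<union> (fv_t t2 - {x}) \<union> fv_e e1 \<union> fv_e e2 \<union> fv_e e3"
| "fv_t (TRef x b r) = fv_e r - {x}"
| "fv_t (TArr x t1 t2) = fv_t t1 \<union> (fv_t t2 - {x})"
| "fv_t (TPEq t el er) = fv_t t \<union> fv_e el \<union> fv_e er"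

definition closed :: "exp \<Rightarrow> bool" where
  "closed e \<longleftrightarrow> fv_e e = {}"

definition fresh :: "var set \<Rightarrow> var" where
  "fresh A = (LEAST z. z \<notin> A)"

text \<open>Name for a binder x (with body free variables S) under substitution \<sigma>:
  keep x unless it would capture a free variable of some substituted term.\<close>
definition pick :: "(var \<Rightarrow> exp) \<Rightarrow> var \<Rightarrow> var set \<Rightarrow> var" where
  "pick \<sigma> x S = (let A = (\<Union>w\<in>S - {x}. fv_e (\<sigma> w)) in if x \<notin> A then x else fresh A)"

fun ssubst_e :: "(var \<Rightarrow> exp) \<Rightarrow> exp \<Rightarrow> exp"
and ssubst_t :: "(var \<Rightarrow> exp) \<Rightarrow> ty \<Rightarrow> ty" where
  "ssubst_e \<sigma> (Const c) = Const c"
| "ssubst_e \<sigma> (Var x) = \<sigma> x"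
| "ssubst_e \<sigma> (App e1 e2) = App (ssubst_e \<sigma> e1) (ssubst_e \<sigma> e2)"
| "ssubst_e \<sigma> (Lam x t e) =
     (let z = pick \<sigma> x (fv_e e) in Lam z (ssubst_t \<sigma> t) (ssubst_e (\<sigma>(x := Var z)) e))"
| "ssubst_e \<sigma> (BEq b e1 e2 e3) = BEq b (ssubst_e \<sigma> e1) (ssubst_e \<sigma> e2) (ssubst_e \<sigma> e3)"
| "ssubst_e \<sigma> (XEq x t1 t2 e1 e2 e3) =
     (let z = pick \<sigma> x (fv_t t2) in
      XEq z (ssubst_t \<sigma> t1) (ssubst_t (\<sigma>(x := Var z)) t2)
            (ssubst_e \<sigma> e1) (ssubst_e \<sigma> e2) (ssubst_e \<sigma> e3))"
| "ssubst_t \<sigma> (TRef x b r) =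
     (let z = pick \<sigma> x (fv_e r) in TRef z b (ssubst_e (\<sigma>(x := Var z)) r))"
| "ssubst_t \<sigma> (TArr x t1 t2) =
     (let z = pick \<sigma> x (fv_t t2) in TArr z (ssubst_t \<sigma> t1) (ssubst_t (\<sigma>(x := Var z)) t2))"
| "ssubst_t \<sigma> (TPEq t el er) = TPEq (ssubst_t \<sigma> t) (ssubst_e \<sigma> el) (ssubst_e \<sigma> er)"

definition subst_e :: "var \<Rightarrow> exp \<Rightarrow> exp \<Rightarrow> exp" where
  "subst_e x e' e = ssubst_e (Var(x := e')) e"

definition subst_t :: "var \<Rightarrow> exp \<Rightarrow> ty \<Rightarrow> ty" where
  "subst_t x e' t = ssubst_t (Var(x := e')) t"

fun is_val :: "exp \<Rightarrow> bool" where
  "is_val (Const c) = True"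
| "is_val (Lam x t e) = True"
| "is_val (BEq b e1 e2 v) = is_val v"
| "is_val (XEq x t1 t2 e1 e2 v) = is_val v"
| "is_val _ = False"

inductive step :: "exp \<Rightarrow> exp \<Rightarrow> bool" (infix "\<longrightarrow>\<^sub>s" 50) where
  app1: "e \<longrightarrow>\<^sub>s e' \<Longrightarrow> App e e2 \<longrightarrow>\<^sub>s App e' e2"
| app2: "is_val v \<Longrightarrow> e \<longrightarrow>\<^sub>s e' \<Longrightarrow> App v e \<longrightarrow>\<^sub>s App v e'"
| beq: "e \<longrightarrow>\<^sub>s e' \<Longrightarrow> BEq b e1 e2 e \<longrightarrow>\<^sub>s BEq b e1 e2 e'"
| xeq: "e \<longrightarrow>\<^sub>s e' \<Longrightarrow> XEq x t1 t2 e1 e2 e \<longrightarrow>\<^sub>s XEq x t1 t2 e1 e2 e'"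
| beta: "is_val v \<Longrightarrow> App (Lam x t e) v \<longrightarrow>\<^sub>s subst_e x v e"
| eq1: "App (Const (CEqB b)) (Const c1) \<longrightarrow>\<^sub>s Const (CEqCB c1 b)"
| eq2: "App (Const (CEqCB c1 b)) (Const c2) \<longrightarrow>\<^sub>s Const (if c1 = c2 then CTrue else CFalse)"

definition steps :: "exp \<Rightarrow> exp \<Rightarrow> bool" (infix "\<longrightarrow>\<^sup>*" 50) where
  "steps = step\<^sup>*\<^sup>*"

fun btype :: "const \<Rightarrow> base \<Rightarrow> bool" where
  "btype CTrue BBool = True"
| "btype CFalse BBool = True"
| "btype CUnit BUnit = True"
| "btype _ _ = False"

text \<open>A pending substitution: list of (x, v1, v2); the most recent binding (head) wins.
  \<delta>,(v1,v2)/x is  (x,v1,v2) # \<delta>.\<close>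
type_synonym psubst = "(var \<times> exp \<times> exp) list"

definition pending :: "psubst \<Rightarrow> bool" where
  "pending \<delta> \<longleftrightarrow> (\<forall>(x, v1, v2) \<in> set \<delta>. is_val v1 \<and> is_val v2 \<and> closed v1 \<and> closed v2)"

definition delta1 :: "psubst \<Rightarrow> exp \<Rightarrow> exp" where
  "delta1 \<delta> e = ssubst_e (\<lambda>w. case map_of \<delta> w of Some (v1, v2) \<Rightarrow> v1 | None \<Rightarrow> Var w) e"

definition delta2 :: "psubst \<Rightarrow> exp \<Rightarrow> exp" where
  "delta2 \<delta> e = ssubst_e (\<lambda>w. case map_of \<delta> w of Some (v1, v2) \<Rightarrow> v2 | None \<Rightarrow> Var w) e"

fun val_rel :: "psubst \<Rightarrow> exp \<Rightarrow> exp \<Rightarrow> ty \<Rightarrow> bool" where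
  "val_rel \<delta> v1 v2 (TRef x b r) =
     (\<exists>c. v1 = Const c \<and> v2 = Const c \<and> btype c b \<and>
          delta1 \<delta> (subst_e x (Const c) r) \<longrightarrow>\<^sup>* Const CTrue \<and>
          delta2 \<delta> (subst_e x (Const c) r) \<longrightarrow>\<^sup>* Const CTrue)"
| "val_rel \<delta> v1 v2 (TArr x tx t) =
     (\<forall>v3 v4. is_val v3 \<and> is_val v4 \<and> closed v3 \<and> closed v4 \<and> val_rel \<delta> v3 v4 tx \<longrightarrow>
        (\<exists>w1 w2. App v1 v3 \<longrightarrow>\<^sup>* w1 \<and> App v2 v4 \<longrightarrow>\<^sup>* w2 \<and> is_val w1 \<and> is_val w2 \<and>
                 val_rel ((x, v3, v4) # \<delta>) w1 w2 t))"
| "val_rel \<delta> v1 v2 (TPEq t el er) =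
     (\<exists>w1 w2. delta1 \<delta> el \<longrightarrow>\<^sup>* w1 \<and> delta2 \<delta> er \<longrightarrow>\<^sup>* w2 \<and> is_val w1 \<and> is_val w2 \<and>
              val_rel \<delta> w1 w2 t)"

definition exp_rel :: "psubst \<Rightarrow> exp \<Rightarrow> exp \<Rightarrow> ty \<Rightarrow> bool" where
  "exp_rel \<delta> e1 e2 t \<longleftrightarrow>
     (\<exists>v1 v2. e1 \<longrightarrow>\<^sup>* v1 \<and> e2 \<longrightarrow>\<^sup>* v2 \<and> is_val v1 \<and> is_val v2 \<and> val_rel \<delta> v1 v2 t)"

end

theory Submission
  imports Defs
begin

(* The relation at \<tau>[x:=e\<^sub>x] under \<delta> and at \<tau> under \<delta>,(v\<^sub>1,v\<^sub>2)/x only differ in the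
   expressions inside refinement and equality types, where the former has \<delta>\<^sub>i(e\<^sub>x) wherever the
   latter has v\<^sub>i. Since \<delta>\<^sub>i(e\<^sub>x) reduces to v\<^sub>i, the former term arises from the latter by replacing
   closed subterms with terms that reduce to them. Reduction is deterministic, so such a "delayed" term
   evaluates to a delayed version of the original value; hence both satisfy the same refinements and,
   by induction on \<tau>, the two relations coincide. Substitution renames binders, so the comparison
   is made up to alpha-equivalence, on nameless terms. *)

section \<open>Nameless terms\<close>

(* Bound variables are de Bruijn indices (DB), free ones stay names (DF). Type annotations are
   dropped: reduction never inspects them, and alpha-equivalent terms get equal images. *)
datatype dexp = DC const | DB nat | DF var | DApp dexp dexp | DLam dexp
  | DBEq base dexp dexp dexp | DXEq dexp dexp dexp

fun dopen :: "nat \<Rightarrow> dexp \<Rightarrow> dexp \<Rightarrow> dexp" where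
  "dopen k u (DC c) = DC c"
| "dopen k u (DB i) = (if i = k then u else DB i)"
| "dopen k u (DF x) = DF x"
| "dopen k u (DApp a b) = DApp (dopen k u a) (dopen k u b)"
| "dopen k u (DLam b) = DLam (dopen (Suc k) u b)"
| "dopen k u (DBEq bs a b c) = DBEq bs (dopen k u a) (dopen k u b) (dopen k u c)"
| "dopen k u (DXEq a b c) = DXEq (dopen k u a) (dopen k u b) (dopen k u c)"

fun dsubst :: "(var \<Rightarrow> dexp) \<Rightarrow> dexp \<Rightarrow> dexp" where
  "dsubst \<rho> (DC c) = DC c"
| "dsubst \<rho> (DB i) = DB i"
| "dsubst \<rho> (DF x) = \<rho> x"
| "dsubst \<rho> (DApp a b) = DApp (dsubst \<rho> a) (dsubst \<rho> b)"
| "dsubst \<rho> (DLam b) = DLam (dsubst \<rho> b)"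
| "dsubst \<rho> (DBEq bs a b c) = DBEq bs (dsubst \<rho> a) (dsubst \<rho> b) (dsubst \<rho> c)"
| "dsubst \<rho> (DXEq a b c) = DXEq (dsubst \<rho> a) (dsubst \<rho> b) (dsubst \<rho> c)"

fun dlc :: "nat \<Rightarrow> dexp \<Rightarrow> bool" where
  "dlc k (DC c) = True"
| "dlc k (DB i) = (i < k)"
| "dlc k (DF x) = True"
| "dlc k (DApp a b) = (dlc k a \<and> dlc k b)"
| "dlc k (DLam b) = dlc (Suc k) b"
| "dlc k (DBEq bs a b c) = (dlc k a \<and> dlc k b \<and> dlc k c)"
| "dlc k (DXEq a b c) = (dlc k a \<and> dlc k b \<and> dlc k c)"

fun dfv :: "dexp \<Rightarrow> var set" where
  "dfv (DC c) = {}"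
| "dfv (DB i) = {}"
| "dfv (DF x) = {x}"
| "dfv (DApp a b) = dfv a \<union> dfv b"
| "dfv (DLam b) = dfv b"
| "dfv (DBEq bs a b c) = dfv a \<union> dfv b \<union> dfv c"
| "dfv (DXEq a b c) = dfv a \<union> dfv b \<union> dfv c"

fun dval :: "dexp \<Rightarrow> bool" where
  "dval (DC c) = True"
| "dval (DLam b) = True"
| "dval (DBEq bs a b v) = dval v"
| "dval (DXEq a b v) = dval v"
| "dval _ = False"

inductive dstep :: "dexp \<Rightarrow> dexp \<Rightarrow> bool" where
  dapp1: "dstep e e' \<Longrightarrow> dstep (DApp e e2) (DApp e' e2)"
| dapp2: "dval v \<Longrightarrow> dstep e e' \<Longrightarrow> dstep (DApp v e) (DApp v e')"
| dbeq: "dstep e e' \<Longrightarrow> dstep (DBEq b e1 e2 e) (DBEq b e1 e2 e')"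
| dxeq: "dstep e e' \<Longrightarrow> dstep (DXEq e1 e2 e) (DXEq e1 e2 e')"
| dbeta: "dval v \<Longrightarrow> dstep (DApp (DLam b) v) (dopen 0 v b)"
| deq1: "dstep (DApp (DC (CEqB b)) (DC c1)) (DC (CEqCB c1 b))"
| deq2: "dstep (DApp (DC (CEqCB c1 b)) (DC c2)) (DC (if c1 = c2 then CTrue else CFalse))"

abbreviation dsteps :: "dexp \<Rightarrow> dexp \<Rightarrow> bool" where
  "dsteps \<equiv> dstep\<^sup>*\<^sup>*"

inductive_cases dstep_DCE[elim!]: "dstep (DC c) d"
inductive_cases dstep_DLamE[elim!]: "dstep (DLam b) d"
inductive_cases dstep_DAppE: "dstep (DApp a b) d"
inductive_cases dstep_DBEqE: "dstep (DBEq bs a b c) d"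
inductive_cases dstep_DXEqE: "dstep (DXEq a b c) d"

lemma dval_no_dstep: "dstep v w \<Longrightarrow> \<not> dval v"
  by (induction rule: dstep.induct) auto

lemma dstep_deterministic: "dstep d d1 \<Longrightarrow> dstep d d2 \<Longrightarrow> d1 = d2"
proof (induction arbitrary: d2 rule: dstep.induct)
  case (dapp1 e e' e2)
  from dapp1.prems show ?case
    by (rule dstep_DAppE) (use dapp1 dval_no_dstep in blast)+
next
  case (dapp2 v e e')
  from dapp2.prems show ?case
    by (rule dstep_DAppE) (use dapp2 dval_no_dstep in blast)+
next
  case (dbeq e e' b e1 e2)
  from dbeq.prems show ?case
    by (rule dstep_DBEqE) (use dbeq in blast)
next
  case (dxeq e e' e1 e2)
  from dxeq.prems show ?case
    by (rule dstep_DXEqE) (use dxeq in blast)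
next
  case (dbeta v b)
  from dbeta.prems show ?case
    by (rule dstep_DAppE) (use dbeta dval_no_dstep in blast)+
qed (auto elim: dstep_DAppE)

lemma dstep_DApp_cases:
  assumes "dstep (DApp a1 a2) a'"
  obtains (head) a1' where "dstep a1 a1'" "a' = DApp a1' a2"
  | (arg) a2' where "dval a1" "dstep a2 a2'" "a' = DApp a1 a2'"
  | (redex) "dval a1" "dval a2"
  using assms by (elim dstep_DAppE) auto

lemma dsteps_dstep_deterministic: "dsteps b a \<Longrightarrow> dstep b b' \<Longrightarrow> a = b \<or> dsteps b' a"
  by (metis converse_rtranclpE dstep_deterministic)

lemma dsteps_dval: "dsteps v w \<Longrightarrow> dval v \<Longrightarrow> w = v"
  by (induction rule: converse_rtranclp_induct) (auto dest: dval_no_dstep)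

lemma dsteps_DApp1: "dsteps a a' \<Longrightarrow> dsteps (DApp a b) (DApp a' b)"
  by (induction rule: rtranclp_induct) (auto intro: rtranclp.rtrancl_into_rtrancl dapp1)

lemma dsteps_DApp2: "dsteps b b' \<Longrightarrow> dval v \<Longrightarrow> dsteps (DApp v b) (DApp v b')"
  by (induction rule: rtranclp_induct) (auto intro: rtranclp.rtrancl_into_rtrancl dapp2)

lemma dsteps_DApp: "dsteps a a' \<Longrightarrow> dval a' \<Longrightarrow> dsteps b b' \<Longrightarrow> dsteps (DApp a b) (DApp a' b')"
  by (meson dsteps_DApp1 dsteps_DApp2 rtranclp_trans)

lemma dsteps_DBEq: "dsteps a a' \<Longrightarrow> dsteps (DBEq bs x y a) (DBEq bs x y a')"
  by (induction rule: rtranclp_induct) (auto intro: rtranclp.rtrancl_into_rtrancl dbeq)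

lemma dsteps_DXEq: "dsteps a a' \<Longrightarrow> dsteps (DXEq x y a) (DXEq x y a')"
  by (induction rule: rtranclp_induct) (auto intro: rtranclp.rtrancl_into_rtrancl dxeq)

lemma dlc_mono: "dlc k d \<Longrightarrow> k \<le> j \<Longrightarrow> dlc j d"
  by (induction d arbitrary: k j) fastforce+

lemma dopen_dlc: "dlc k d \<Longrightarrow> k \<le> j \<Longrightarrow> dopen j u d = d"
  by (induction d arbitrary: k j) fastforce+

lemma dlc_dopen: "dlc (Suc k) b \<Longrightarrow> dlc k u \<Longrightarrow> dlc k (dopen k u b)"
proof (induction b arbitrary: k)
  case (DLam b)
  then show ?case using dlc_mono[of k u "Suc k"] by auto
qed auto

lemma dlc_dstep: "dstep d d' \<Longrightarrow> dlc 0 d \<Longrightarrow> dlc 0 d'"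
  by (induction rule: dstep.induct) (auto intro: dlc_dopen)

lemma dlc_dsteps: "dsteps d d' \<Longrightarrow> dlc 0 d \<Longrightarrow> dlc 0 d'"
  by (induction rule: rtranclp_induct) (auto intro: dlc_dstep)

lemma dlc_dsubst: "dlc k d \<Longrightarrow> (\<And>w. dlc 0 (\<rho> w)) \<Longrightarrow> dlc k (dsubst \<rho> d)"
  by (induction d arbitrary: k) (auto intro: dlc_mono)

lemma dsubst_dsubst: "dsubst \<rho> (dsubst \<rho>' d) = dsubst (\<lambda>w. dsubst \<rho> (\<rho>' w)) d"
  by (induction d) auto

lemma dsubst_cong: "(\<And>w. w \<in> dfv d \<Longrightarrow> \<rho> w = \<rho>' w) \<Longrightarrow> dsubst \<rho> d = dsubst \<rho>' d"
  by (induction d) auto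

lemma dsubst_id: "(\<And>w. w \<in> dfv d \<Longrightarrow> \<rho> w = DF w) \<Longrightarrow> dsubst \<rho> d = d"
  by (induction d) auto

section \<open>Translation of named terms\<close>

fun bound_index :: "var list \<Rightarrow> var \<Rightarrow> nat option" where
  "bound_index [] x = None"
| "bound_index (y # ys) x = (if x = y then Some 0 else map_option Suc (bound_index ys x))"

(* G lists the enclosing binders, innermost first. *)
fun nameless :: "var list \<Rightarrow> exp \<Rightarrow> dexp" where
  "nameless G (Const c) = DC c"
| "nameless G (Var x) = (case bound_index G x of Some i \<Rightarrow> DB i | None \<Rightarrow> DF x)"
| "nameless G (App e1 e2) = DApp (nameless G e1) (nameless G e2)"
| "nameless G (Lam x t e) = DLam (nameless (x # G) e)"
| "nameless G (BEq b e1 e2 e3) = DBEq b (nameless G e1) (nameless G e2) (nameless G e3)"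
| "nameless G (XEq x t1 t2 e1 e2 e3) = DXEq (nameless G e1) (nameless G e2) (nameless G e3)"

abbreviation db :: "exp \<Rightarrow> dexp" where
  "db \<equiv> nameless []"

lemma bound_index_None_iff: "bound_index G x = None \<longleftrightarrow> x \<notin> set G"
  by (induction G) auto

lemma bound_index_Some: "bound_index G x = Some i \<Longrightarrow> i < length G \<and> G ! i = x"
  by (induction G arbitrary: i) (auto split: if_splits)

lemma bound_index_append:
  "bound_index (D @ G) x =
     (if x \<in> set D then bound_index D x else map_option ((+) (length D)) (bound_index G x))"
  by (induction D) (auto simp: map_option_case split: option.splits)

lemma finite_fv: "finite (fv_e e)" "finite (fv_t t)"
  by (induction e and t rule: exp.induct ty.induct) auto

lemma dfv_nameless: "dfv (nameless G e) \<subseteq> fv_e e - set G"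
  by (induction e arbitrary: G rule: exp.induct[where ?P2.0="\<lambda>_. True"])
     (fastforce split: option.splits simp: bound_index_None_iff)+

lemma dlc_nameless: "dlc (length G) (nameless G e)"
proof (induction e arbitrary: G rule: exp.induct[where ?P2.0="\<lambda>_. True"])
  case (Lam x t e)
  then show ?case using Lam.IH[of "x # G"] by simp
qed (auto split: option.splits dest: bound_index_Some)

lemma dlc_db: "dlc 0 (db e)"
  using dlc_nameless[of "[]" e] by simp

lemma nameless_append:
  "\<forall>w \<in> fv_e e - set D. w \<notin> set G \<Longrightarrow> nameless (D @ G) e = nameless D e"
proof (induction e arbitrary: D rule: exp.induct[where ?P2.0="\<lambda>_. True"])
  case (Var x)
  then show ?case
    by (auto simp: bound_index_append bound_index_None_iff split: option.splits dest!: bound_index_Some)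
next
  case (Lam x t e)
  then show ?case using Lam.IH[of "x # D"] by auto
qed auto

lemma nameless_unbound: "fv_e e \<inter> set G = {} \<Longrightarrow> nameless G e = db e"
  using nameless_append[of e "[]" G] by auto

lemma dval_nameless: "dval (nameless G e) = is_val e"
  by (induction e arbitrary: G rule: exp.induct[where ?P2.0="\<lambda>_. True"])
     (auto split: option.splits)

lemma pick_fresh:
  assumes "finite S" "w \<in> S" "w \<noteq> x"
  shows "pick \<sigma> x S \<notin> fv_e (\<sigma> w)"
proof -
  define A where "A = (\<Union>w\<in>S - {x}. fv_e (\<sigma> w))"
  have "finite A"
    unfolding A_def using assms(1) finite_fv(1) by auto
  then have "fresh A \<notin> A"
    unfolding fresh_def by (metis LeastI ex_new_if_finite infinite_UNIV_nat)
  moreover have "fv_e (\<sigma> w) \<subseteq> A"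
    unfolding A_def using assms by auto
  ultimately show ?thesis
    unfolding pick_def A_def[symmetric] Let_def by auto
qed

(* Under binders G in the source and G' in the target, \<sigma> renames the inner binders of G to
   those of G', instantiates the outermost binder of G by a term translating to u, and sends free
   names to terms not captured by G'. *)
definition subst_ctx :: "var list \<Rightarrow> var list \<Rightarrow> dexp \<Rightarrow> (var \<Rightarrow> exp) \<Rightarrow> var \<Rightarrow> bool" where
  "subst_ctx G G' u \<sigma> w \<longleftrightarrow>
     (case bound_index G w of
        Some i \<Rightarrow>
          if i < length G' then \<sigma> w = Var (G' ! i) \<and> bound_index G' (G' ! i) = Some i
          else db (\<sigma> w) = u \<and> fv_e (\<sigma> w) \<inter> set G' = {}
      | None \<Rightarrow> fv_e (\<sigma> w) \<inter> set G' = {})"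

lemma subst_ctx_Cons:
  assumes "subst_ctx G G' u \<sigma> w" "w \<noteq> y" "z \<notin> fv_e (\<sigma> w)" "length G = Suc (length G')"
  shows "subst_ctx (y # G) (z # G') u (\<sigma>(y := Var z)) w"
proof (cases "bound_index G w")
  case None
  then show ?thesis
    using assms unfolding subst_ctx_def by simp
next
  case (Some i)
  then have "i \<le> length G'"
    using bound_index_Some assms(4) by fastforce
  then show ?thesis
    using assms Some unfolding subst_ctx_def by (simp split: if_splits)
qed

lemma nameless_ssubst_dopen_Var:
  assumes "length G = Suc (length G')" and ctx: "subst_ctx G G' u \<sigma> x"
  shows "nameless G' (\<sigma> x) = dopen (length G') u (dsubst (\<lambda>w. db (\<sigma> w)) (nameless G (Var x)))"
proof (cases "bound_index G x")
  case None
  then have "nameless G' (\<sigma> x) = db (\<sigma> x)"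
    using ctx nameless_unbound[of "\<sigma> x" G'] by (simp add: subst_ctx_def)
  then show ?thesis
    using None by (simp add: dopen_dlc[OF dlc_db])
next
  case (Some i)
  then have "i < Suc (length G')"
    using bound_index_Some assms(1) by fastforce
  then consider "i < length G'" | "i = length G'"
    by linarith
  then show ?thesis
  proof cases
    case 1
    then show ?thesis
      using ctx Some by (simp add: subst_ctx_def)
  next
    case 2
    then have "nameless G' (\<sigma> x) = db (\<sigma> x)" "db (\<sigma> x) = u"
      using ctx Some nameless_unbound[of "\<sigma> x" G'] by (simp_all add: subst_ctx_def)
    then show ?thesis
      using Some 2 by simp
  qed
qed

lemma nameless_ssubst_dopen:
  "length G = Suc (length G') \<Longrightarrow> \<forall>w\<in>fv_e e. subst_ctx G G' u \<sigma> w \<Longrightarrow>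
   nameless G' (ssubst_e \<sigma> e) = dopen (length G') u (dsubst (\<lambda>w. db (\<sigma> w)) (nameless G e))"
proof (induction e arbitrary: G G' \<sigma> rule: exp.induct[where ?P2.0="\<lambda>_. True"])
  case (Var x)
  then show ?case
    using nameless_ssubst_dopen_Var by simp
next
  case (Lam y t e)
  define z where "z = pick \<sigma> y (fv_e e)"
  have "subst_ctx (y # G) (z # G') u (\<sigma>(y := Var z)) w" if "w \<in> fv_e e" for w
  proof (cases "w = y")
    case True
    then show ?thesis by (simp add: subst_ctx_def)
  next
    case False
    then show ?thesis
      using Lam.prems that pick_fresh[OF finite_fv(1) that False]
      by (intro subst_ctx_Cons) (auto simp: z_def)
  qed
  then have "nameless (z # G') (ssubst_e (\<sigma>(y := Var z)) e) =
      dopen (Suc (length G')) u (dsubst (\<lambda>w. db ((\<sigma>(y := Var z)) w)) (nameless (y # G) e))"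
    using Lam.IH[of "y # G" "z # G'"] Lam.prems(1) by simp
  moreover have "dsubst (\<lambda>w. db ((\<sigma>(y := Var z)) w)) (nameless (y # G) e) =
      dsubst (\<lambda>w. db (\<sigma> w)) (nameless (y # G) e)"
    by (rule dsubst_cong) (use dfv_nameless[of "y # G" e] in auto)
  ultimately show ?case
    by (simp add: Let_def z_def)
qed (auto simp: Let_def)

lemma db_ssubst: "db (ssubst_e \<sigma> e) = dsubst (\<lambda>w. db (\<sigma> w)) (db e)"
proof -
  obtain y where y: "y \<notin> fv_e e"
    using finite_fv(1)[of e] ex_new_if_finite infinite_UNIV_nat by blast
  then have "nameless [y] e = db e"
    using nameless_append[of e "[]" "[y]"] by auto
  \<comment> \<open>the dummy binder y does not occur, so the choice of u is irrelevant\<close>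
  moreover have "db (ssubst_e \<sigma> e) = dopen 0 (DC CTrue) (dsubst (\<lambda>w. db (\<sigma> w)) (nameless [y] e))"
    using nameless_ssubst_dopen[of "[y]" "[]" e "DC CTrue" \<sigma>] y
    by (auto simp: subst_ctx_def split: option.splits if_splits)
  moreover have "dlc 0 (dsubst (\<lambda>w. db (\<sigma> w)) (db e))"
    by (intro dlc_dsubst dlc_db)
  ultimately show ?thesis
    using dopen_dlc by simp
qed

lemma db_subst: "db (subst_e y v e) = dopen 0 (db v) (nameless [y] e)"
proof -
  have "db (subst_e y v e) = dopen 0 (db v) (dsubst (\<lambda>w. db ((Var(y := v)) w)) (nameless [y] e))"
    unfolding subst_e_def using nameless_ssubst_dopen[of "[y]" "[]" e "db v" "Var(y := v)"]
    by (auto simp: subst_ctx_def split: option.splits if_splits)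
  moreover have "dsubst (\<lambda>w. db ((Var(y := v)) w)) (nameless [y] e) = nameless [y] e"
    by (rule dsubst_id) (use dfv_nameless[of "[y]" e] in auto)
  ultimately show ?thesis
    by simp
qed

lemma db_ssubst_cong: "(\<And>w. w \<in> fv_e e \<Longrightarrow> \<sigma> w = \<sigma>' w) \<Longrightarrow> db (ssubst_e \<sigma> e) = db (ssubst_e \<sigma>' e)"
  unfolding db_ssubst by (rule dsubst_cong) (use dfv_nameless[of "[]" e] in auto)

lemma nameless_eq_DC_iff: "nameless G a = DC c \<longleftrightarrow> a = Const c"
  by (cases a) (auto split: option.splits)

lemma nameless_eq_DApp_iff:
  "nameless G a = DApp d1 d2 \<longleftrightarrow> (\<exists>a1 a2. a = App a1 a2 \<and> nameless G a1 = d1 \<and> nameless G a2 = d2)"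
  by (cases a) (auto split: option.splits)

lemma nameless_eq_DLam_iff:
  "nameless G a = DLam d \<longleftrightarrow> (\<exists>x t e. a = Lam x t e \<and> nameless (x # G) e = d)"
  by (cases a) (auto split: option.splits)

lemma nameless_eq_DBEq_iff:
  "nameless G a = DBEq bs d1 d2 d3 \<longleftrightarrow>
     (\<exists>a1 a2 a3. a = BEq bs a1 a2 a3 \<and> nameless G a1 = d1 \<and> nameless G a2 = d2 \<and> nameless G a3 = d3)"
  by (cases a) (auto split: option.splits)

lemma nameless_eq_DXEq_iff:
  "nameless G a = DXEq d1 d2 d3 \<longleftrightarrow>
     (\<exists>x t1 t2 a1 a2 a3. a = XEq x t1 t2 a1 a2 a3 \<and>
        nameless G a1 = d1 \<and> nameless G a2 = d2 \<and> nameless G a3 = d3)"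
  by (cases a) (auto split: option.splits)

lemmas nameless_eq_iffs = nameless_eq_DC_iff nameless_eq_DApp_iff nameless_eq_DLam_iff
  nameless_eq_DBEq_iff nameless_eq_DXEq_iff

lemma dstep_db: "a \<longrightarrow>\<^sub>s a' \<Longrightarrow> dstep (db a) (db a')"
proof (induction rule: step.induct)
  case (beta v x t e)
  then show ?case
    by (simp add: db_subst dval_nameless dbeta)
next
  case (eq2 c1 b c2)
  show ?case
    using deq2[of c1 b c2] by (cases "c1 = c2") auto
qed (auto simp: dval_nameless intro: dstep.intros)

lemma step_of_dstep_db: "dstep d d' \<Longrightarrow> db a = d \<Longrightarrow> \<exists>a'. a \<longrightarrow>\<^sub>s a' \<and> db a' = d'"
proof (induction arbitrary: a rule: dstep.induct)
  case (dbeta v b)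
  then obtain x t e a2 where "a = App (Lam x t e) a2" "nameless [x] e = b" "db a2 = v"
    by (auto simp: nameless_eq_iffs)
  moreover have "is_val a2"
    using dbeta.hyps calculation by (metis dval_nameless)
  ultimately show ?case
    by (metis db_subst step.beta)
qed (fastforce simp: nameless_eq_iffs dval_nameless intro: step.intros)+

lemma dsteps_db: "a \<longrightarrow>\<^sup>* a' \<Longrightarrow> dsteps (db a) (db a')"
  unfolding steps_def
  by (induction rule: rtranclp_induct) (auto intro: rtranclp.rtrancl_into_rtrancl dstep_db)

lemma steps_of_dsteps_db: "dsteps (db a) d' \<Longrightarrow> \<exists>a'. a \<longrightarrow>\<^sup>* a' \<and> db a' = d'"
  unfolding steps_def
proof (induction rule: rtranclp_induct)
  case (step d d')
  then show ?case
    by (metis rtranclp.rtrancl_into_rtrancl step_of_dstep_db)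
qed auto

section \<open>Delayed terms\<close>

(* delayed a b: b is a with some locally closed subterms replaced by terms reducing to them. *)
inductive delayed :: "dexp \<Rightarrow> dexp \<Rightarrow> bool" where
  dl_const: "delayed (DC c) (DC c)"
| dl_bound: "delayed (DB i) (DB i)"
| dl_free: "delayed (DF w) (DF w)"
| dl_app: "delayed a1 b1 \<Longrightarrow> delayed a2 b2 \<Longrightarrow> delayed (DApp a1 a2) (DApp b1 b2)"
| dl_lam: "delayed a b \<Longrightarrow> delayed (DLam a) (DLam b)"
| dl_beq: "delayed a1 b1 \<Longrightarrow> delayed a2 b2 \<Longrightarrow> delayed a3 b3 \<Longrightarrow>
    delayed (DBEq bs a1 a2 a3) (DBEq bs b1 b2 b3)"
| dl_xeq: "delayed a1 b1 \<Longrightarrow> delayed a2 b2 \<Longrightarrow> delayed a3 b3 \<Longrightarrow>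
    delayed (DXEq a1 a2 a3) (DXEq b1 b2 b3)"
| dl_reduct: "dlc 0 b \<Longrightarrow> dsteps b a \<Longrightarrow> delayed a b"

lemma delayed_refl: "delayed d d"
  by (induction d) (auto intro: delayed.intros)

lemma delayed_dopen: "delayed a b \<Longrightarrow> delayed u u' \<Longrightarrow> delayed (dopen k u a) (dopen k u' b)"
proof (induction arbitrary: k rule: delayed.induct)
  case (dl_reduct b a)
  then have "dopen k u a = a" "dopen k u' b = b"
    using dlc_dsteps dopen_dlc by blast+
  then show ?case
    using dl_reduct by (simp add: delayed.dl_reduct)
qed (auto intro: delayed.intros)

lemma delayed_dsubst:
  "(\<And>w. w \<in> dfv d \<Longrightarrow> delayed (\<rho> w) (\<rho>' w)) \<Longrightarrow> delayed (dsubst \<rho> d) (dsubst \<rho>' d)"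
  by (induction d) (auto intro: delayed.intros)

lemma delayed_dval: "delayed a b \<Longrightarrow> dval b \<Longrightarrow> dval a"
  by (induction rule: delayed.induct) (auto dest: dsteps_dval)

lemma delayed_DC_right: "delayed a (DC c) \<Longrightarrow> a = DC c"
  by (induction a "DC c" rule: delayed.induct) (auto dest: dsteps_dval)

lemma delayed_DC_left: "delayed (DC c) b \<Longrightarrow> dval b \<Longrightarrow> b = DC c"
  by (induction "DC c" b rule: delayed.induct) (auto dest: dsteps_dval)

lemma delayed_DLam_left: "delayed (DLam a) b \<Longrightarrow> dval b \<Longrightarrow> \<exists>b'. b = DLam b' \<and> delayed a b'"
  by (induction "DLam a" b rule: delayed.induct) (auto dest: dsteps_dval intro: delayed_refl)

lemma delayed_DLam_right: "delayed a (DLam b) \<Longrightarrow> \<exists>a'. a = DLam a' \<and> delayed a' b"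
proof (induction a "DLam b" rule: delayed.induct)
  case (dl_reduct a)
  then show ?case
    using dsteps_dval[of "DLam b" a] delayed_refl by auto
qed auto

lemma delayed_dval_cases:
  assumes "delayed a b" "dval a" "dval b"
  obtains (const) c where "a = DC c" "b = DC c"
  | (lam) a' b' where "a = DLam a'" "b = DLam b'" "delayed a' b'"
  | (other) "\<forall>c. a \<noteq> DC c \<and> b \<noteq> DC c" "\<forall>d. a \<noteq> DLam d \<and> b \<noteq> DLam d"
  using assms delayed_DC_left delayed_DC_right delayed_DLam_left delayed_DLam_right
  by (cases a rule: dexp.exhaust) blast+

lemma delayed_redex_left:
  assumes "delayed a1 b1" "delayed a2 b2" "dval a1" "dval a2" "dval b1" "dval b2"
    and "dstep (DApp a1 a2) a'"
  shows "\<exists>b'. dstep (DApp b1 b2) b' \<and> delayed a' b'"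
  by (cases rule: delayed_dval_cases[OF assms(1,3,5)];
      cases rule: delayed_dval_cases[OF assms(2,4,6)])
     (use assms in \<open>fastforce elim!: dstep_DAppE dest: dval_no_dstep
        intro: dstep.intros delayed_refl delayed_dopen dl_lam\<close>)+

lemma delayed_redex_right:
  assumes "delayed a1 b1" "delayed a2 b2" "dval a1" "dval a2" "dval b1" "dval b2"
    and "dstep (DApp b1 b2) b'"
  shows "\<exists>a'. dstep (DApp a1 a2) a' \<and> delayed a' b'"
  by (cases rule: delayed_dval_cases[OF assms(1,3,5)];
      cases rule: delayed_dval_cases[OF assms(2,4,6)])
     (use assms in \<open>fastforce elim!: dstep_DAppE dest: dval_no_dstep
        intro: dstep.intros delayed_refl delayed_dopen dl_lam\<close>)+

lemma delayed_dval_left: "delayed a b \<Longrightarrow> dval a \<Longrightarrow> \<exists>b'. dsteps b b' \<and> dval b' \<and> delayed a b'"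
proof (induction rule: delayed.induct)
  case (dl_beq a1 b1 a2 b2 a3 b3 bs)
  then show ?case
    by (metis dl_beq.hyps(1,2) delayed.dl_beq dsteps_DBEq dval.simps(3))
next
  case (dl_xeq a1 b1 a2 b2 a3 b3)
  then show ?case
    by (metis dl_xeq.hyps(1,2) delayed.dl_xeq dsteps_DXEq dval.simps(4))
next
  case (dl_reduct b a)
  then show ?case
    using delayed_refl by blast
qed (auto intro: delayed.intros)

lemma delayed_dstep_left: "delayed a b \<Longrightarrow> dstep a a' \<Longrightarrow> \<exists>b'. dsteps b b' \<and> delayed a' b'"
proof (induction arbitrary: a' rule: delayed.induct)
  case (dl_app a1 b1 a2 b2)
  from dl_app.prems show ?case
  proof (cases rule: dstep_DApp_cases)
    case (head a1')
    then obtain b1' where "dsteps b1 b1'" "delayed a1' b1'"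
      using dl_app.IH(1) by blast
    then show ?thesis
      using head dl_app.hyps(2) by (blast intro: dsteps_DApp1 delayed.dl_app)
  next
    case (arg a2')
    obtain b1' where b1': "dsteps b1 b1'" "dval b1'" "delayed a1 b1'"
      using delayed_dval_left dl_app.hyps(1) arg(1) by blast
    obtain b2' where "dsteps b2 b2'" "delayed a2' b2'"
      using dl_app.IH(2) arg(2) by blast
    then show ?thesis
      using arg b1' dsteps_DApp[OF b1'(1,2)] by (blast intro: delayed.dl_app)
  next
    case redex
    obtain b1' b2' where b': "dsteps b1 b1'" "dval b1'" "delayed a1 b1'"
      "dsteps b2 b2'" "dval b2'" "delayed a2 b2'"
      using delayed_dval_left dl_app.hyps redex by meson
    then obtain b' where "dstep (DApp b1' b2') b'" "delayed a' b'"
      using delayed_redex_left redex dl_app.prems by blast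
    then show ?thesis
      using dsteps_DApp[OF b'(1,2,4)] by (meson rtranclp.rtrancl_into_rtrancl)
  qed
next
  case (dl_beq a1 b1 a2 b2 a3 b3 bs)
  from dl_beq.prems show ?case
    by (elim dstep_DBEqE) (use dl_beq in \<open>blast intro: dsteps_DBEq delayed.dl_beq\<close>)
next
  case (dl_xeq a1 b1 a2 b2 a3 b3)
  from dl_xeq.prems show ?case
    by (elim dstep_DXEqE) (use dl_xeq in \<open>blast intro: dsteps_DXEq delayed.dl_xeq\<close>)
next
  case (dl_reduct b a)
  then show ?case
    by (meson delayed_refl rtranclp.rtrancl_into_rtrancl)
qed (auto elim: dstep.cases)

lemma delayed_dstep_right:
  "delayed a b \<Longrightarrow> dstep b b' \<Longrightarrow> delayed a b' \<or> (\<exists>a'. dstep a a' \<and> delayed a' b')"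
proof (induction arbitrary: b' rule: delayed.induct)
  case (dl_app a1 b1 a2 b2)
  from dl_app.prems show ?case
  proof (cases rule: dstep_DApp_cases)
    case (head b1')
    from dl_app.IH(1)[OF head(1)] show ?thesis
      using head dl_app.hyps(2) by (elim disjE exE conjE) (auto intro: delayed.dl_app dapp1)
  next
    case (arg b2')
    then have "dval a1"
      using delayed_dval dl_app.hyps(1) by blast
    from dl_app.IH(2)[OF arg(2)] show ?thesis
      using arg \<open>dval a1\<close> dl_app.hyps(1) by (elim disjE exE conjE) (auto intro: delayed.dl_app dapp2)
  next
    case redex
    then have "dval a1" "dval a2"
      using delayed_dval dl_app.hyps by blast+
    then show ?thesis
      using delayed_redex_right[OF dl_app.hyps(1,2)] redex dl_app.prems by blast
  qed
next
  case (dl_beq a1 b1 a2 b2 a3 b3 bs)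
  from dl_beq.prems show ?case
    by (elim dstep_DBEqE) (use dl_beq in \<open>blast intro: delayed.dl_beq dbeq\<close>)
next
  case (dl_xeq a1 b1 a2 b2 a3 b3)
  from dl_xeq.prems show ?case
    by (elim dstep_DXEqE) (use dl_xeq in \<open>blast intro: delayed.dl_xeq dxeq\<close>)
next
  case (dl_reduct b a)
  then have "a = b \<or> dsteps b' a" "dlc 0 b'"
    using dsteps_dstep_deterministic dlc_dstep by blast+
  then show ?case
    using dl_reduct.prems delayed_refl delayed.dl_reduct by blast
qed (auto elim: dstep.cases)

lemma delayed_eval_left:
  "dsteps a v \<Longrightarrow> dval v \<Longrightarrow> delayed a b \<Longrightarrow> \<exists>v'. dsteps b v' \<and> dval v' \<and> delayed v v'"
proof (induction arbitrary: b rule: converse_rtranclp_induct)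
  case base
  then show ?case
    using delayed_dval_left by blast
next
  case (step a a1)
  then obtain b1 where "dsteps b b1" "delayed a1 b1"
    using delayed_dstep_left by blast
  then show ?case
    using step.IH step.prems by (meson rtranclp_trans)
qed

lemma delayed_eval_right:
  "dsteps b v' \<Longrightarrow> dval v' \<Longrightarrow> delayed a b \<Longrightarrow> \<exists>v. dsteps a v \<and> dval v \<and> delayed v v'"
proof (induction arbitrary: a rule: converse_rtranclp_induct)
  case base
  then show ?case
    using delayed_dval by blast
next
  case (step b b1)
  from delayed_dstep_right[OF step.prems(2) step.hyps(1)] show ?case
    using step.IH step.prems by (meson converse_rtranclp_into_rtranclp)
qed

section \<open>The logical relation under delayed substitutions\<close>

lemma delayed_eval_db_left:
  assumes "delayed (db a) (db b)" "a \<longrightarrow>\<^sup>* v" "is_val v"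
  shows "\<exists>v'. b \<longrightarrow>\<^sup>* v' \<and> is_val v' \<and> delayed (db v) (db v')"
proof -
  obtain d where "dsteps (db b) d" "dval d" "delayed (db v) d"
    using delayed_eval_left[OF dsteps_db[OF assms(2)]] assms(1,3) by (auto simp: dval_nameless)
  then show ?thesis
    by (metis steps_of_dsteps_db dval_nameless)
qed

lemma delayed_eval_db_right:
  assumes "delayed (db a) (db b)" "b \<longrightarrow>\<^sup>* v'" "is_val v'"
  shows "\<exists>v. a \<longrightarrow>\<^sup>* v \<and> is_val v \<and> delayed (db v) (db v')"
proof -
  obtain d where "dsteps (db a) d" "dval d" "delayed d (db v')"
    using delayed_eval_right[OF dsteps_db[OF assms(2)]] assms(1,3) by (auto simp: dval_nameless)
  then show ?thesis
    by (metis steps_of_dsteps_db dval_nameless)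
qed

lemma delayed_db_Const_iff: "delayed (db a) (db b) \<Longrightarrow> is_val b \<Longrightarrow> a = Const c \<longleftrightarrow> b = Const c"
  by (metis delayed_DC_left delayed_DC_right dval_nameless nameless.simps(1) nameless_eq_DC_iff)

lemma steps_Const_iff_delayed: "delayed (db a) (db b) \<Longrightarrow> a \<longrightarrow>\<^sup>* Const c \<longleftrightarrow> b \<longrightarrow>\<^sup>* Const c"
  by (metis delayed_eval_db_left delayed_eval_db_right delayed_db_Const_iff is_val.simps(1)
      delayed_DC_right nameless.simps(1) nameless_eq_DC_iff)

lemma eval_pair_delayed_cong:
  assumes "delayed (db a1) (db b1)" "delayed (db a2) (db b2)"
    and "\<And>v1 v2 v1' v2'. delayed (db v1) (db v1') \<Longrightarrow> delayed (db v2) (db v2') \<Longrightarrow>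
      is_val v1' \<Longrightarrow> is_val v2' \<Longrightarrow> P v1 v2 \<longleftrightarrow> Q v1' v2'"
  shows "(\<exists>v1 v2. a1 \<longrightarrow>\<^sup>* v1 \<and> a2 \<longrightarrow>\<^sup>* v2 \<and> is_val v1 \<and> is_val v2 \<and> P v1 v2) \<longleftrightarrow>
         (\<exists>v1 v2. b1 \<longrightarrow>\<^sup>* v1 \<and> b2 \<longrightarrow>\<^sup>* v2 \<and> is_val v1 \<and> is_val v2 \<and> Q v1 v2)"
  using delayed_eval_db_left[OF assms(1)] delayed_eval_db_left[OF assms(2)]
    delayed_eval_db_right[OF assms(1)] delayed_eval_db_right[OF assms(2)] assms(3)
  by meson

lemma val_rel_delayed:
  "delayed (db u1) (db u1') \<Longrightarrow> delayed (db u2) (db u2') \<Longrightarrow> is_val u1' \<Longrightarrow> is_val u2' \<Longrightarrow>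
   val_rel \<delta> u1 u2 t \<longleftrightarrow> val_rel \<delta> u1' u2' t"
proof (induction t arbitrary: \<delta> u1 u2 u1' u2' rule: ty.induct[where ?P1.0="\<lambda>_. True"])
  case (TRef x b r)
  then show ?case
    using delayed_db_Const_iff by (metis val_rel.simps(1))
next
  case (TArr x tx t)
  have "(\<exists>w1 w2. App u1 v3 \<longrightarrow>\<^sup>* w1 \<and> App u2 v4 \<longrightarrow>\<^sup>* w2 \<and> is_val w1 \<and> is_val w2 \<and>
           val_rel ((x, v3, v4) # \<delta>) w1 w2 t) \<longleftrightarrow>
        (\<exists>w1 w2. App u1' v3 \<longrightarrow>\<^sup>* w1 \<and> App u2' v4 \<longrightarrow>\<^sup>* w2 \<and> is_val w1 \<and> is_val w2 \<and>
           val_rel ((x, v3, v4) # \<delta>) w1 w2 t)" for v3 v4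
    by (rule eval_pair_delayed_cong) (use TArr in \<open>auto intro: dl_app delayed_refl\<close>)
  then show ?case
    by (simp only: val_rel.simps)
qed auto

definition psubst_fun :: "(exp \<times> exp \<Rightarrow> exp) \<Rightarrow> psubst \<Rightarrow> var \<Rightarrow> exp" where
  "psubst_fun f \<delta> w = (case map_of \<delta> w of Some p \<Rightarrow> f p | None \<Rightarrow> Var w)"

lemma delta1_eq: "delta1 \<delta> = ssubst_e (psubst_fun fst \<delta>)"
  unfolding delta1_def psubst_fun_def
  by (intro ext arg_cong2[where f = ssubst_e]) (auto split: option.splits)

lemma delta2_eq: "delta2 \<delta> = ssubst_e (psubst_fun snd \<delta>)"
  unfolding delta2_def psubst_fun_def
  by (intro ext arg_cong2[where f = ssubst_e]) (auto split: option.splits)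

definition delayed_subst :: "(var \<Rightarrow> exp) \<Rightarrow> (var \<Rightarrow> exp) \<Rightarrow> var set \<Rightarrow> bool" where
  "delayed_subst \<rho> \<rho>' S \<longleftrightarrow> (\<forall>w\<in>S. delayed (db (\<rho> w)) (db (\<rho>' w)))"

lemma delayed_ssubst:
  "delayed_subst \<rho> \<rho>' (fv_e e) \<Longrightarrow> delayed (db (ssubst_e \<rho> e)) (db (ssubst_e \<rho>' e))"
  unfolding db_ssubst
  by (rule delayed_dsubst) (use dfv_nameless[of "[]" e] in \<open>auto simp: delayed_subst_def\<close>)

lemma db_ssubst_ssubst: "db (ssubst_e \<rho> (ssubst_e \<sigma> e)) = db (ssubst_e (\<lambda>w. ssubst_e \<rho> (\<sigma> w)) e)"
  by (simp add: db_ssubst dsubst_dsubst)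

lemma delayed_ssubst_subst_binder:
  assumes "delayed_subst \<rho> (\<lambda>w. ssubst_e \<rho>' (\<sigma> w)) (fv_e r - {y})" and z: "z = pick \<sigma> y (fv_e r)"
  shows "delayed (db (ssubst_e \<rho> (subst_e y (Const c) r)))
           (db (ssubst_e \<rho>' (subst_e z (Const c) (ssubst_e (\<sigma>(y := Var z)) r))))"
proof -
  have "delayed (db (ssubst_e (\<lambda>w. ssubst_e \<rho> ((Var(y := Const c)) w)) r))
      (db (ssubst_e (\<lambda>w. ssubst_e \<rho>' (ssubst_e (Var(z := Const c)) ((\<sigma>(y := Var z)) w))) r))"
  proof (rule delayed_ssubst, unfold delayed_subst_def, intro ballI)
    fix w assume w: "w \<in> fv_e r"
    show "delayed (db (ssubst_e \<rho> ((Var(y := Const c)) w)))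
        (db (ssubst_e \<rho>' (ssubst_e (Var(z := Const c)) ((\<sigma>(y := Var z)) w))))"
    proof (cases "w = y")
      case True
      then show ?thesis
        by (simp add: delayed_refl)
    next
      case False
      have "z \<notin> fv_e (\<sigma> w)"
        using pick_fresh[OF finite_fv(1) w False] z by simp
      then have "db (ssubst_e \<rho>' (ssubst_e (Var(z := Const c)) (\<sigma> w))) = db (ssubst_e \<rho>' (\<sigma> w))"
        unfolding db_ssubst_ssubst by (intro db_ssubst_cong) auto
      then show ?thesis
        using assms(1) w False by (simp add: delayed_subst_def)
    qed
  qed
  then show ?thesis
    by (simp add: subst_e_def db_ssubst dsubst_dsubst)
qed

definition delayed_psubst :: "psubst \<Rightarrow> psubst \<Rightarrow> (var \<Rightarrow> exp) \<Rightarrow> var set \<Rightarrow> bool" where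
  "delayed_psubst \<delta> \<delta>' \<sigma> S \<longleftrightarrow>
     (\<forall>f\<in>{fst, snd}. delayed_subst (psubst_fun f \<delta>) (\<lambda>w. ssubst_e (psubst_fun f \<delta>') (\<sigma> w)) S)"

lemma delayed_psubst_mono: "delayed_psubst \<delta> \<delta>' \<sigma> S \<Longrightarrow> T \<subseteq> S \<Longrightarrow> delayed_psubst \<delta> \<delta>' \<sigma> T"
  unfolding delayed_psubst_def delayed_subst_def by blast

lemma delayed_psubst_Cons:
  assumes "delayed_psubst \<delta> \<delta>' \<sigma> (S - {y})" and "\<forall>w\<in>S - {y}. z \<notin> fv_e (\<sigma> w)"
  shows "delayed_psubst ((y, v1, v2) # \<delta>) ((z, v1, v2) # \<delta>') (\<sigma>(y := Var z)) S"
  unfolding delayed_psubst_def delayed_subst_def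
proof (intro ballI)
  fix f :: "exp \<times> exp \<Rightarrow> exp" and w
  assume "f \<in> {fst, snd}" "w \<in> S"
  show "delayed (db (psubst_fun f ((y, v1, v2) # \<delta>) w))
      (db (ssubst_e (psubst_fun f ((z, v1, v2) # \<delta>')) ((\<sigma>(y := Var z)) w)))"
  proof (cases "w = y")
    case True
    then show ?thesis
      by (simp add: psubst_fun_def delayed_refl)
  next
    case False
    have "db (ssubst_e (psubst_fun f ((z, v1, v2) # \<delta>')) (\<sigma> w)) = db (ssubst_e (psubst_fun f \<delta>') (\<sigma> w))"
      by (rule db_ssubst_cong) (use assms(2) \<open>w \<in> S\<close> False in \<open>auto simp: psubst_fun_def\<close>)
    moreover have "psubst_fun f ((y, v1, v2) # \<delta>) w = psubst_fun f \<delta> w"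
      using False by (simp add: psubst_fun_def)
    ultimately show ?thesis
      using assms(1) \<open>f \<in> {fst, snd}\<close> \<open>w \<in> S\<close> False
      by (auto simp: delayed_psubst_def delayed_subst_def)
  qed
qed

lemma val_rel_ssubst_t:
  "delayed_psubst \<delta> \<delta>' \<sigma> (fv_t t) \<Longrightarrow> val_rel \<delta> v1 v2 t \<longleftrightarrow> val_rel \<delta>' v1 v2 (ssubst_t \<sigma> t)"
proof (induction t arbitrary: \<delta> \<delta>' \<sigma> v1 v2 rule: ty.induct[where ?P1.0="\<lambda>_. True"])
  case (TRef y b r)
  define z where "z = pick \<sigma> y (fv_e r)"
  have "delayed_subst (psubst_fun f \<delta>) (\<lambda>w. ssubst_e (psubst_fun f \<delta>') (\<sigma> w)) (fv_e r - {y})"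
    if "f \<in> {fst, snd}" for f
    using TRef.prems that by (auto simp: delayed_psubst_def)
  then have "delta1 \<delta> (subst_e y (Const c) r) \<longrightarrow>\<^sup>* Const CTrue \<longleftrightarrow>
        delta1 \<delta>' (subst_e z (Const c) (ssubst_e (\<sigma>(y := Var z)) r)) \<longrightarrow>\<^sup>* Const CTrue"
    "delta2 \<delta> (subst_e y (Const c) r) \<longrightarrow>\<^sup>* Const CTrue \<longleftrightarrow>
        delta2 \<delta>' (subst_e z (Const c) (ssubst_e (\<sigma>(y := Var z)) r)) \<longrightarrow>\<^sup>* Const CTrue" for c
    unfolding delta1_eq delta2_eq
    by (simp_all add: steps_Const_iff_delayed delayed_ssubst_subst_binder z_def)
  then show ?case
    by (simp add: z_def Let_def)
next
  case (TArr y tx t)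
  define z where "z = pick \<sigma> y (fv_t t)"
  have IH1: "val_rel \<delta> v3 v4 tx \<longleftrightarrow> val_rel \<delta>' v3 v4 (ssubst_t \<sigma> tx)" for v3 v4
    using TArr.IH(1) TArr.prems delayed_psubst_mono by simp
  have "delayed_psubst ((y, v3, v4) # \<delta>) ((z, v3, v4) # \<delta>') (\<sigma>(y := Var z)) (fv_t t)" for v3 v4
    using TArr.prems pick_fresh[OF finite_fv(2)] delayed_psubst_mono
    by (intro delayed_psubst_Cons) (auto simp: z_def)
  then have IH2: "val_rel ((y, v3, v4) # \<delta>) w1 w2 t \<longleftrightarrow>
      val_rel ((z, v3, v4) # \<delta>') w1 w2 (ssubst_t (\<sigma>(y := Var z)) t)" for v3 v4 w1 w2
    using TArr.IH(2) by blast
  show ?case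
    by (simp only: ssubst_t.simps Let_def z_def[symmetric] val_rel.simps IH1 IH2)
next
  case (TPEq t el er)
  have IH: "val_rel \<delta> w1 w2 t \<longleftrightarrow> val_rel \<delta>' w1 w2 (ssubst_t \<sigma> t)" for w1 w2
    by (rule TPEq.IH(1), rule delayed_psubst_mono[OF TPEq.prems]) auto
  have "delayed (db (delta1 \<delta> el)) (db (delta1 \<delta>' (ssubst_e \<sigma> el)))"
    "delayed (db (delta2 \<delta> er)) (db (delta2 \<delta>' (ssubst_e \<sigma> er)))"
    using TPEq.prems unfolding delta1_eq delta2_eq db_ssubst_ssubst
    by (auto intro!: delayed_ssubst simp: delayed_psubst_def delayed_subst_def)
  then show ?case
    unfolding ssubst_t.simps val_rel.simps
    by (rule eval_pair_delayed_cong) (use val_rel_delayed IH in blast)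
qed auto

lemma delayed_psubst_instantiate:
  assumes "delta1 \<delta> e \<longrightarrow>\<^sup>* v1" and "delta2 \<delta> e \<longrightarrow>\<^sup>* v2"
  shows "delayed_psubst ((x, v1, v2) # \<delta>) \<delta> (Var(x := e)) S"
  using assms dsteps_db dlc_db
  by (auto simp: delayed_psubst_def delayed_subst_def psubst_fun_def delta1_eq delta2_eq
      intro: dl_reduct delayed_refl)

theorem lemmaB21:
  fixes \<delta> :: psubst and ex e1 e2 vx1 vx2 :: exp and x :: var and \<tau> :: ty
  assumes "pending \<delta>"
    and "is_val vx1" and "is_val vx2" and "closed vx1" and "closed vx2"
    and "delta1 \<delta> ex \<longrightarrow>\<^sup>* vx1" and "delta2 \<delta> ex \<longrightarrow>\<^sup>* vx2"
    and "exp_rel ((x, vx1, vx2) # \<delta>) e1 e2 \<tau>"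
  shows "exp_rel \<delta> e1 e2 (subst_t x ex \<tau>)"
proof -
  \<comment> \<open>only the reductions of ex to vx1 and vx2 are used: free names survive the nameless
    translation as DF\<close>
  have "delayed_psubst ((x, vx1, vx2) # \<delta>) \<delta> (Var(x := ex)) (fv_t \<tau>)"
    using assms(6,7) by (rule delayed_psubst_instantiate)
  then have "val_rel ((x, vx1, vx2) # \<delta>) v1 v2 \<tau> \<longleftrightarrow> val_rel \<delta> v1 v2 (subst_t x ex \<tau>)" for v1 v2
    unfolding subst_t_def by (rule val_rel_ssubst_t)
  then show ?thesis
    using assms(8) unfolding exp_rel_def by blast
qed

end
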